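(* Under the hypotheses and notation of the following setup: $d>0$, $\ell$ a certified lower bound with certificate matrix $\Lambda$, $f(d,\ell)=1$, $i\in\{1,\dots,m\}$, $L_i:=a_i^\top y(d,\ell)-\gamma_i(d,\ell)$, $\hat\lambda_i:=\gamma_i(d,\ell)Dt(d,\ell)-DA^\top B(d)^{-1}a_i$, $\tilde\lambda_i:=\Lambda\hat\lambda_i^-+\hat\lambda_i^+$: if $L_i>u_i$, then $\bar\lambda_i:=\tilde\lambda_i+e_i$ satisfies $A\bar\lambda_i=0$, $\bar\lambda_i\ge0$, $u^\top\bar\lambda_i<0$ (so it is a type-L certificate of infeasibility of $A^\top x\le u$).
   Context: Standing assumption: $A=[a_1|\cdots|a_m]\in\mathbb{R}^{n\times m}$ has columns of unit Euclidean norm and $\{A\lambda:\lambda\ge0\}=\mathbb{R}^n$; $u\in\mathbb{R}^m$. $D=\mathrm{diag}(d)$; $r(\ell)=\tfrac12(u+\ell)$, $v(\ell)=\tfrac12(u-\ell)$, $B(d)=ADA^\top$, $y(d,\ell)=B(d)^{-1}ADr(\ell)$, $t(d,\ell)=A^\top y(d,\ell)-r(\ell)$, $f(d,\ell)=v(\ell)^\top Dv(\ell)-t(d,\ell)^\top Dt(d,\ell)$, $\gamma_i(d,\ell)=\sqrt{f(d,\ell)a_i^\top B(d)^{-1}a_i}$ when $f(d,\ell)>0$. $\ell$ is a certified lower bound with certificate matrix $\Lambda\in\mathbb{R}^{m\times m}$ if $A\Lambda=-A$, $\Lambda\ge0$, $-\Lambda^\top u\ge\ell$. $w^\pm$ denote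 positive/negative parts; $e_i$ is the $i$-th unit vector. *)

theory Defs
  imports "HOL-Analysis.Analysis"
begin

definition nonneg_vec :: "real^'m \<Rightarrow> bool" where
  "nonneg_vec x \<longleftrightarrow> (\<forall>j. 0 \<le> x $ j)"

definition Dmat :: "real^'m \<Rightarrow> real^'m^'m" where
  "Dmat d = (\<chi> i j. if i = j then d $ i else 0)"

definition rvec :: "real^'m \<Rightarrow> real^'m \<Rightarrow> real^'m" where
  "rvec u l = (1/2) *\<^sub>R (u + l)"

definition vvec :: "real^'m \<Rightarrow> real^'m \<Rightarrow> real^'m" where
  "vvec u l = (1/2) *\<^sub>R (u - l)"

definition Bmat :: "real^'m^'n \<Rightarrow> real^'m \<Rightarrow> real^'n^'n" where
  "Bmat A d = A ** Dmat d ** transpose A"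

definition yvec :: "real^'m^'n \<Rightarrow> real^'m \<Rightarrow> real^'m \<Rightarrow> real^'m \<Rightarrow> real^'n" where
  "yvec A u d l = matrix_inv (Bmat A d) *v (A *v (Dmat d *v rvec u l))"

definition tvec :: "real^'m^'n \<Rightarrow> real^'m \<Rightarrow> real^'m \<Rightarrow> real^'m \<Rightarrow> real^'m" where
  "tvec A u d l = transpose A *v yvec A u d l - rvec u l"

definition ffun :: "real^'m^'n \<Rightarrow> real^'m \<Rightarrow> real^'m \<Rightarrow> real^'m \<Rightarrow> real" where
  "ffun A u d l = vvec u l \<bullet> (Dmat d *v vvec u l) - tvec A u d l \<bullet> (Dmat d *v tvec A u d l)"

definition gamma :: "real^'m^'n \<Rightarrow> real^'m \<Rightarrow> real^'m \<Rightarrow> real^'m \<Rightarrow> 'm \<Rightarrow> real" where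
  "gamma A u d l i = sqrt (ffun A u d l * (column i A \<bullet> (matrix_inv (Bmat A d) *v column i A)))"

definition pos_part :: "real^'m \<Rightarrow> real^'m" where
  "pos_part w = (\<chi> j. max (w $ j) 0)"

definition neg_part :: "real^'m \<Rightarrow> real^'m" where
  "neg_part w = (\<chi> j. max (- (w $ j)) 0)"

definition standing_A :: "real^'m^'n \<Rightarrow> bool" where
  "standing_A A \<longleftrightarrow> (\<forall>i. norm (column i A) = 1) \<and> {A *v lam | lam. nonneg_vec lam} = UNIV"

definition certified_lb :: "real^'m^'n \<Rightarrow> real^'m \<Rightarrow> real^'m \<Rightarrow> real^'m^'m \<Rightarrow> bool" where
  "certified_lb A u l Lam \<longleftrightarrow> A ** Lam = - A \<and> (\<forall>i j. 0 \<le> Lam $ i $ j)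
     \<and> (\<forall>j. (- (transpose Lam *v u)) $ j \<ge> l $ j)"

end

theory Submission
  imports Defs
begin

text \<open>Write the paper's \<open>\<lambda>\<^sub>i\<close> as \<open>D e\<close> with \<open>e = \<gamma>\<^sub>i t - A\<^sup>T B\<^sup>-\<^sup>1 a\<^sub>i\<close>. Since \<open>y\<close> solves
  \<open>B y = A D r\<close>, we have \<open>A D t = 0\<close>, hence \<open>A D e = -a\<^sub>i\<close>, and \<open>A \<Lambda> = -A\<close> turns this into
  \<open>A \<lambda> = 0\<close> for the certificate \<open>\<lambda> = \<Lambda> (D e)\<^sup>- + (D e)\<^sup>+ + e\<^sub>i\<close>. Writing \<open>u = r + v\<close>,
  \<open>\<ell> = r - v\<close> and using \<open>-\<Lambda>\<^sup>T u \<ge> \<ell>\<close> gives \<open>u\<^sup>T\<lambda> \<le> r\<^sup>T D e + v\<^sup>T |D e| + u\<^sub>i\<close>. Here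
  \<open>r\<^sup>T D e = -\<gamma>\<^sub>i t\<^sup>T D t - a\<^sub>i\<^sup>T y\<close>, and Cauchy-Schwarz for the inner product weighted by \<open>D\<close>
  bounds \<open>v\<^sup>T |D e|\<close> by \<open>\<surd>(v\<^sup>T D v) \<surd>(e\<^sup>T D e) = \<gamma>\<^sub>i (1 + t\<^sup>T D t)\<close>, because \<open>f = 1\<close> makes
  \<open>v\<^sup>T D v = 1 + t\<^sup>T D t\<close> and \<open>\<gamma>\<^sub>i\<^sup>2 = a\<^sub>i\<^sup>T B\<^sup>-\<^sup>1 a\<^sub>i = (A\<^sup>T B\<^sup>-\<^sup>1 a\<^sub>i)\<^sup>T D (A\<^sup>T B\<^sup>-\<^sup>1 a\<^sub>i)\<close>.
  Altogether \<open>u\<^sup>T\<lambda> \<le> u\<^sub>i + \<gamma>\<^sub>i - a\<^sub>i\<^sup>T y = u\<^sub>i - L\<^sub>i < 0\<close>.\<close>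

declare transpose_matrix_vector [simp del]

lemma inner_transpose_matrix_vector:
  fixes M :: "real^'a^'b"
  shows "(transpose M *v x) \<bullet> y = x \<bullet> (M *v y)"
  by (metis dot_lmul_matrix transpose_matrix_vector)

lemma invertible_matrix_inv_right:
  fixes M :: "real^'n^'n"
  assumes "invertible M"
  shows "M *v (matrix_inv M *v x) = x"
proof -
  have "M ** matrix_inv M = mat 1"
    using someI_ex[OF assms[unfolded invertible_def]] by (simp add: matrix_inv_def)
  then show ?thesis by (simp add: matrix_vector_mul_assoc)
qed

lemma matrix_vector_mult_uminus_left: "(- M) *v (x::real^'a) = - (M *v x)"
  by (simp add: vec_eq_iff matrix_vector_mult_def sum_negf)

lemma pos_part_minus_neg_part: "pos_part w - neg_part w = w"
  by (simp add: vec_eq_iff pos_part_def neg_part_def max_def)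

lemma pos_part_plus_neg_part: "pos_part w + neg_part w = (\<chi> j. \<bar>w $ j\<bar>)"
  by (simp add: vec_eq_iff pos_part_def neg_part_def max_def)

lemma nonneg_vec_pos_part: "nonneg_vec (pos_part w)"
  by (simp add: nonneg_vec_def pos_part_def)

lemma nonneg_vec_neg_part: "nonneg_vec (neg_part w)"
  by (simp add: nonneg_vec_def neg_part_def)

lemma Dmat_mult_vec: "Dmat d *v x = (\<chi> j. d $ j * x $ j)"
proof -
  have "(\<Sum>j\<in>UNIV. (if i = j then d $ i else 0) * x $ j) = d $ i * x $ i" for i
    by (subst sum.cong[OF refl, of _ _ "\<lambda>j. if i = j then d $ j * x $ j else 0"]) auto
  then show ?thesis
    by (simp add: Dmat_def matrix_vector_mult_def vec_eq_iff)
qed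

lemma inner_Dmat: "(x::real^'m) \<bullet> (Dmat d *v z) = (\<Sum>j\<in>UNIV. d $ j * x $ j * z $ j)"
  by (simp add: Dmat_mult_vec inner_vec_def algebra_simps)

lemma inner_Dmat_commute: "(x::real^'m) \<bullet> (Dmat d *v z) = z \<bullet> (Dmat d *v x)"
  unfolding inner_Dmat by (simp add: algebra_simps)

lemma transpose_Dmat: "transpose (Dmat d) = Dmat d"
  by (simp add: Dmat_def transpose_def vec_eq_iff)

lemma inner_Dmat_self_nonneg:
  assumes "\<forall>j. 0 \<le> d $ j"
  shows "0 \<le> (x::real^'m) \<bullet> (Dmat d *v x)"
  unfolding inner_Dmat using assms by (simp add: sum_nonneg mult.assoc)

lemma inner_Dmat_self_eq_0:
  assumes "\<forall>j. 0 < d $ j" and "(x::real^'m) \<bullet> (Dmat d *v x) = 0"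
  shows "x = 0"
proof -
  have "\<forall>j\<in>UNIV. d $ j * x $ j * x $ j = 0"
    using assms by (subst sum_nonneg_eq_0_iff[symmetric]) (auto simp: inner_Dmat mult.assoc less_imp_le)
  then show ?thesis
    using assms(1) by (simp add: vec_eq_iff) (metis less_irrefl)
qed

lemma inner_abs_Dmat_le:
  assumes "\<forall>j. 0 \<le> d $ j"
  shows "(v::real^'m) \<bullet> (\<chi> j. \<bar>(Dmat d *v e) $ j\<bar>)
           \<le> sqrt (v \<bullet> (Dmat d *v v)) * sqrt (e \<bullet> (Dmat d *v e))"
proof -
  define s where "s w j = sqrt (d $ j) * \<bar>w $ j\<bar>" for w :: "real^'m" and j
  define S where "S = (\<Sum>j\<in>UNIV. s v j * s e j)"
  have sq: "(s w j)\<^sup>2 = d $ j * w $ j * w $ j" for w j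
    using assms by (simp add: s_def power_mult_distrib power2_abs) (simp add: power2_eq_square)
  have prod: "s v j * s e j = \<bar>v $ j\<bar> * \<bar>(Dmat d *v e) $ j\<bar>" for j
  proof -
    have "s v j * s e j = (sqrt (d $ j) * sqrt (d $ j)) * \<bar>v $ j\<bar> * \<bar>e $ j\<bar>"
      by (simp only: s_def mult_ac)
    then show ?thesis using assms by (simp add: Dmat_mult_vec abs_mult)
  qed
  have "v \<bullet> (\<chi> j. \<bar>(Dmat d *v e) $ j\<bar>) \<le> S"
    unfolding S_def prod inner_vec_def
    by (intro sum_mono) (simp add: mult_right_mono)
  also have "S \<le> sqrt ((v \<bullet> (Dmat d *v v)) * (e \<bullet> (Dmat d *v e)))"
    using Cauchy_Schwarz_ineq_sum[of "s v" "s e" UNIV]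
    by (intro real_le_rsqrt) (simp only: S_def sq inner_Dmat)
  finally show ?thesis by (simp add: real_sqrt_mult)
qed

lemma transpose_Bmat: "transpose (Bmat A d) = Bmat A d"
  by (simp add: Bmat_def matrix_transpose_mul transpose_Dmat matrix_mul_assoc)

lemma Bmat_mult_vec: "Bmat A d *v x = A *v (Dmat d *v (transpose A *v x))"
  by (simp add: Bmat_def matrix_vector_mul_assoc matrix_mul_assoc)

lemma invertible_Bmat:
  fixes A :: "real^'m^'n"
  assumes "surj ((*v) A)" and "\<forall>j. 0 < d $ j"
  shows "invertible (Bmat A d)"
proof -
  have "x = 0" if "Bmat A d *v x = 0" for x
  proof -
    have "(transpose A *v x) \<bullet> (Dmat d *v (transpose A *v x)) = x \<bullet> (Bmat A d *v x)"
      by (simp add: inner_transpose_matrix_vector Bmat_mult_vec)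
    with that have "transpose A *v x = 0"
      using inner_Dmat_self_eq_0[OF assms(2)] by simp
    moreover obtain lam where "x = A *v lam"
      using assms(1) by (metis surjD)
    ultimately have "x \<bullet> x = 0"
      by (simp add: inner_transpose_matrix_vector[symmetric])
    then show "x = 0" by simp
  qed
  then show ?thesis
    by (meson invertible_left_inverse matrix_left_invertible_ker)
qed

lemma standing_A_surj: "standing_A A \<Longrightarrow> surj ((*v) A)"
  unfolding standing_A_def by blast

text \<open>The paper's \<open>\<hat>\<lambda>\<^sub>i\<close> is \<open>Dmat d *v lam_dir A u d l i\<close>.\<close>

definition lam_dir :: "real^'m^'n \<Rightarrow> real^'m \<Rightarrow> real^'m \<Rightarrow> real^'m \<Rightarrow> 'm \<Rightarrow> real^'m" where
  "lam_dir A u d l i = gamma A u d l i *\<^sub>R tvec A u d l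
     - transpose A *v (matrix_inv (Bmat A d) *v column i A)"

context
  fixes A :: "real^'m^'n" and u d l :: "real^'m" and i :: 'm
  assumes B_invertible: "invertible (Bmat A d)"
begin

lemma A_Dmat_tvec: "A *v (Dmat d *v tvec A u d l) = 0"
  by (simp add: tvec_def yvec_def Bmat_mult_vec[symmetric] matrix_vector_mult_diff_distrib
      invertible_matrix_inv_right[OF B_invertible])

lemma A_Dmat_transpose_matrix_inv:
  "A *v (Dmat d *v (transpose A *v (matrix_inv (Bmat A d) *v x))) = x"
  by (simp add: Bmat_mult_vec[symmetric] invertible_matrix_inv_right[OF B_invertible])

lemma rvec_inner_Dmat_tvec:
  "rvec u l \<bullet> (Dmat d *v tvec A u d l) = - (tvec A u d l \<bullet> (Dmat d *v tvec A u d l))"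
proof -
  have "(transpose A *v yvec A u d l) \<bullet> (Dmat d *v tvec A u d l) = 0"
    by (simp add: inner_transpose_matrix_vector A_Dmat_tvec)
  then show ?thesis
    by (simp add: tvec_def [of A u d l] inner_diff_left)
qed

lemma rvec_inner_Dmat_transpose_matrix_inv:
  "rvec u l \<bullet> (Dmat d *v (transpose A *v (matrix_inv (Bmat A d) *v x))) = x \<bullet> yvec A u d l"
proof -
  let ?Bi = "matrix_inv (Bmat A d)"
  have "rvec u l \<bullet> (Dmat d *v (transpose A *v (?Bi *v x)))
          = (?Bi *v x) \<bullet> (Bmat A d *v yvec A u d l)"
    by (simp add: inner_Dmat_commute[of "rvec u l"] inner_transpose_matrix_vector yvec_def
        invertible_matrix_inv_right[OF B_invertible])
  also have "\<dots> = (Bmat A d *v (?Bi *v x)) \<bullet> yvec A u d l"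
    by (metis inner_transpose_matrix_vector transpose_Bmat)
  finally show ?thesis
    by (simp add: invertible_matrix_inv_right[OF B_invertible])
qed

lemma inner_Dmat_transpose_matrix_inv_self:
  "(transpose A *v (matrix_inv (Bmat A d) *v x)) \<bullet> (Dmat d *v (transpose A *v (matrix_inv (Bmat A d) *v x)))
     = x \<bullet> (matrix_inv (Bmat A d) *v x)"
  by (simp add: inner_transpose_matrix_vector A_Dmat_transpose_matrix_inv inner_commute)

lemma A_Dmat_lam_dir: "A *v (Dmat d *v lam_dir A u d l i) = - column i A"
  by (simp add: lam_dir_def matrix_vector_mult_diff_distrib matrix_vector_mult_scaleR
      A_Dmat_tvec A_Dmat_transpose_matrix_inv)

lemma rvec_inner_Dmat_lam_dir:
  "rvec u l \<bullet> (Dmat d *v lam_dir A u d l i)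
     = - gamma A u d l i * (tvec A u d l \<bullet> (Dmat d *v tvec A u d l)) - column i A \<bullet> yvec A u d l"
  by (simp add: lam_dir_def matrix_vector_mult_diff_distrib matrix_vector_mult_scaleR inner_diff_right
      rvec_inner_Dmat_tvec rvec_inner_Dmat_transpose_matrix_inv)

lemma inner_Dmat_lam_dir:
  "lam_dir A u d l i \<bullet> (Dmat d *v lam_dir A u d l i)
     = (gamma A u d l i)\<^sup>2 * (tvec A u d l \<bullet> (Dmat d *v tvec A u d l))
       + column i A \<bullet> (matrix_inv (Bmat A d) *v column i A)"
proof -
  define t where "t = tvec A u d l"
  define w where "w = transpose A *v (matrix_inv (Bmat A d) *v column i A)"
  have tDw: "t \<bullet> (Dmat d *v w) = 0"
  proof -
    have "t \<bullet> (Dmat d *v w) = (matrix_inv (Bmat A d) *v column i A) \<bullet> (A *v (Dmat d *v t))"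
      by (simp add: inner_Dmat_commute[of t] w_def inner_transpose_matrix_vector)
    then show ?thesis by (simp add: t_def A_Dmat_tvec)
  qed
  have wDw: "w \<bullet> (Dmat d *v w) = column i A \<bullet> (matrix_inv (Bmat A d) *v column i A)"
    unfolding w_def by (rule inner_Dmat_transpose_matrix_inv_self)
  show ?thesis
    using tDw inner_Dmat_commute[of w d t]
    by (simp add: lam_dir_def flip: t_def w_def)
      (simp add: wDw matrix_vector_mult_diff_distrib matrix_vector_mult_scaleR
        inner_diff_left inner_diff_right power2_eq_square algebra_simps)
qed

lemma vvec_inner_abs_Dmat_lam_dir_le:
  assumes d_pos: "\<forall>j. 0 < d $ j" and f_eq_1: "ffun A u d l = 1"
  shows "vvec u l \<bullet> (\<chi> j. \<bar>(Dmat d *v lam_dir A u d l i) $ j\<bar>)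
           \<le> gamma A u d l i * (1 + tvec A u d l \<bullet> (Dmat d *v tvec A u d l))"
proof -
  define g where "g = gamma A u d l i"
  define T where "T = tvec A u d l \<bullet> (Dmat d *v tvec A u d l)"
  define q where "q = column i A \<bullet> (matrix_inv (Bmat A d) *v column i A)"
  have d_nonneg: "\<forall>j. 0 \<le> d $ j" using d_pos by (simp add: less_imp_le)
  have q_nonneg: "0 \<le> q"
    using inner_Dmat_transpose_matrix_inv_self[of "column i A"]
      inner_Dmat_self_nonneg[OF d_nonneg] unfolding q_def by metis
  have g_sq: "g\<^sup>2 = q" and g_nonneg: "0 \<le> g"
    using q_nonneg by (simp_all add: g_def gamma_def f_eq_1 q_def)
  have vDv: "vvec u l \<bullet> (Dmat d *v vvec u l) = 1 + T"
    using f_eq_1 by (simp add: ffun_def T_def)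
  have T1_nonneg: "0 \<le> 1 + T"
    using vDv inner_Dmat_self_nonneg[OF d_nonneg, of "vvec u l"] by simp
  have "vvec u l \<bullet> (\<chi> j. \<bar>(Dmat d *v lam_dir A u d l i) $ j\<bar>)
          \<le> sqrt (1 + T) * sqrt (g\<^sup>2 * (1 + T))"
    using inner_abs_Dmat_le[OF d_nonneg, of "vvec u l" "lam_dir A u d l i"]
    by (simp add: vDv inner_Dmat_lam_dir g_sq algebra_simps flip: g_def T_def q_def)
  also have "\<dots> = g * (1 + T)"
    using g_nonneg T1_nonneg by (simp add: real_sqrt_mult)
  finally show ?thesis by (simp only: g_def T_def)
qed

end

lemma certified_lb_certificate:
  fixes A :: "real^'m^'n"
  assumes cert: "certified_lb A u l Lam" and Ah: "A *v h = - column i A"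
  defines "lbar \<equiv> Lam *v neg_part h + pos_part h + axis i 1"
  shows "A *v lbar = 0"
    and "nonneg_vec lbar"
    and "u \<bullet> lbar \<le> rvec u l \<bullet> h + vvec u l \<bullet> (\<chi> j. \<bar>h $ j\<bar>) + u $ i"
proof -
  have A_Lam: "A ** Lam = - A" and Lam_nonneg: "\<forall>i j. 0 \<le> Lam $ i $ j"
    and lower: "\<forall>j. l $ j \<le> - (transpose Lam *v u) $ j"
    using cert by (simp_all add: certified_lb_def)
  have "A *v lbar = A *v (pos_part h - neg_part h) + column i A"
    by (simp add: lbar_def matrix_vector_right_distrib matrix_vector_mul_assoc A_Lam
        matrix_vector_mult_uminus_left matrix_vector_mult_diff_distrib matrix_vector_mult_basis)
  also have "\<dots> = 0"
    by (simp add: pos_part_minus_neg_part Ah)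
  finally show "A *v lbar = 0" .
  show "nonneg_vec lbar"
    using Lam_nonneg nonneg_vec_pos_part[of h] nonneg_vec_neg_part[of h]
    by (simp add: nonneg_vec_def lbar_def matrix_vector_mult_def sum_nonneg axis_def)
  have "u \<bullet> (Lam *v neg_part h) = (transpose Lam *v u) \<bullet> neg_part h"
    by (simp add: inner_transpose_matrix_vector)
  also have "\<dots> \<le> (- l) \<bullet> neg_part h"
    unfolding inner_vec_def
  proof (rule sum_mono)
    fix j
    have "(transpose Lam *v u) $ j \<le> - l $ j"
      using lower[rule_format, of j] by linarith
    from mult_right_mono[OF this, of "neg_part h $ j"]
    show "(transpose Lam *v u) $ j \<bullet> neg_part h $ j \<le> (- l) $ j \<bullet> neg_part h $ j"
      using nonneg_vec_neg_part[of h]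
      by (simp add: nonneg_vec_def)
  qed
  finally have "u \<bullet> lbar \<le> u \<bullet> pos_part h - l \<bullet> neg_part h + u $ i"
    by (simp add: lbar_def inner_add_right inner_axis)
  also have "u \<bullet> pos_part h - l \<bullet> neg_part h
               = rvec u l \<bullet> (pos_part h - neg_part h) + vvec u l \<bullet> (pos_part h + neg_part h)"
    by (simp add: rvec_def vvec_def inner_add_left inner_diff_left inner_add_right inner_diff_right
        algebra_simps)
  finally show "u \<bullet> lbar \<le> rvec u l \<bullet> h + vvec u l \<bullet> (\<chi> j. \<bar>h $ j\<bar>) + u $ i"
    by (simp only: pos_part_minus_neg_part pos_part_plus_neg_part)
qed

theorem corollary3:
  fixes A :: "real^'m^'n" and u d l :: "real^'m" and Lam :: "real^'m^'m" and i :: 'm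
  assumes "standing_A A"
    and "\<forall>j. 0 < d $ j"
    and "certified_lb A u l Lam"
    and "ffun A u d l = 1"
    and "column i A \<bullet> yvec A u d l - gamma A u d l i > u $ i"
  shows "let lhat = gamma A u d l i *\<^sub>R (Dmat d *v tvec A u d l)
                    - Dmat d *v (transpose A *v (matrix_inv (Bmat A d) *v column i A));
             ltil = Lam *v neg_part lhat + pos_part lhat;
             lbar = ltil + axis i 1
         in A *v lbar = 0 \<and> nonneg_vec lbar \<and> u \<bullet> lbar < 0"
proof -
  let ?h = "Dmat d *v lam_dir A u d l i"
  let ?lbar = "Lam *v neg_part ?h + pos_part ?h + axis i 1"
  have B_invertible: "invertible (Bmat A d)"
    by (rule invertible_Bmat[OF standing_A_surj[OF assms(1)] assms(2)])
  note certificate = certified_lb_certificate[OF assms(3) A_Dmat_lam_dir[OF B_invertible]]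
  have "u \<bullet> ?lbar \<le> rvec u l \<bullet> ?h + vvec u l \<bullet> (\<chi> j. \<bar>?h $ j\<bar>) + u $ i"
    by (rule certificate(3))
  also have "\<dots> \<le> gamma A u d l i - column i A \<bullet> yvec A u d l + u $ i"
    using rvec_inner_Dmat_lam_dir[OF B_invertible, of u l i]
      vvec_inner_abs_Dmat_lam_dir_le[OF B_invertible assms(2,4), of i]
    by (simp add: algebra_simps)
  also have "\<dots> < 0" using assms(5) by simp
  finally show ?thesis
    using certificate(1,2)
    by (simp add: Let_def lam_dir_def matrix_vector_mult_diff_distrib matrix_vector_mult_scaleR)
qed

end
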